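(* Let $\pi$ be an algorithmic policy mapping the prediction matrix $\mathbf G=(g_l(X_i))_{i,l}$ to an assignment satisfying the capacity constraints, and suppose that for $P^{\mathcal M}$-almost every realization $(\mathbf x,\mathbf y,\mathbf l)$ of $(\mathbf X,\mathbf Y,\mathbf L)$ we have $\pi(\mathbf g)\in\Pi_{\mathbf x,\mathbf y,\mathbf l}$, where $\mathbf g=(g_l(x_i))$. Then $$\mathbb E_{\mathbf Y\sim P^{\mathcal M;\,do(\mathbf L=\pi(\mathbf G))}}[\mathbf 1^T\mathbf Y]\ \ge\ \mathbb E_{\mathbf Y\sim P^{\mathcal M}}[\mathbf 1^T\mathbf Y],$$ i.e. $\pi$ achieves at least the expected utility of the default policy $\tilde\pi$.
   Context: Setup (structural causal model $\mathcal M$ of a resettlement process). A pool $\mathcal I$ of $n$ refugees is matched to a finite set $\mathcal L$ of $k$ locations, location $l$ having capacity $c_l\in\mathbb N$. Exogenous noise variables $D_i\sim P(D)$ ($i\in\mathcal I$), $V_{i,l}\sim P(V\mid L=l)$ ($i\in\mathcal I,l\in\mathcal L$) and $W\sim P(W)$ are all mutually independent. Endogenous variables: $X_i=f_X(D_i)$, $\mathbf L=\tilde\pi(\mathbf X,W)\in\mathcal L^n$ (default policy $\tilde\pi$), $Y_i=f_Y(D_i,V_{i,L_i})\in\{0,1\}$, $U=\mathbf 1^T\mathbf Y$. A classifier gives maps $g_l:\mathcal X\to[0,1]$. An assignment is a map $\pi:\mathcal I\to\mathcal L$ with $|\{i:\pi_i=l\}|\le c_l$. $\Pi_{\mathbf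 x,\mathbf y,\mathbf l}$ is the set of assignments $\pi$ with $\pi_i=l_i$ for all $i$ with $y_i=1$. The interventional distribution $P^{\mathcal M;do(\mathbf L=\pi(\mathbf G))}$ is obtained by drawing fresh noise, setting $X_i=f_X(D_i)$, $\mathbf G=(g_l(X_i))$, $\mathbf L=\pi(\mathbf G)$, $Y_i=f_Y(D_i,V_{i,L_i})$. *)

theory Defs
  imports "HOL-Probability.Probability"
begin

text \<open>Refugees are indexed by a finite type 'i, locations by a finite type 'l.
  A noise realisation is a triple (d, v, w) with d i = D_i, v (i,l) = V_{i,l}, w = W.\<close>

type_synonym ('i, 'l, 'd, 'v, 'w) noise = "('i \<Rightarrow> 'd) \<times> (('i \<times> 'l) \<Rightarrow> 'v) \<times> 'w"

definition noise_measure ::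
  "'d measure \<Rightarrow> ('l \<Rightarrow> 'v measure) \<Rightarrow> 'w measure \<Rightarrow> ('i, 'l, 'd, 'v, 'w) noise measure" where
  "noise_measure PD PV PW =
     (PiM UNIV (\<lambda>i. PD)) \<Otimes>\<^sub>M ((PiM UNIV (\<lambda>il. PV (snd il))) \<Otimes>\<^sub>M PW)"

definition Xvar :: "('d \<Rightarrow> 'x) \<Rightarrow> ('i, 'l, 'd, 'v, 'w) noise \<Rightarrow> 'i \<Rightarrow> 'x" where
  "Xvar fX \<omega> i = fX (fst \<omega> i)"

definition Lvar :: "('d \<Rightarrow> 'x) \<Rightarrow> (('i \<Rightarrow> 'x) \<Rightarrow> 'w \<Rightarrow> ('i \<Rightarrow> 'l))
                      \<Rightarrow> ('i, 'l, 'd, 'v, 'w) noise \<Rightarrow> 'i \<Rightarrow> 'l" where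
  "Lvar fX pdef \<omega> = pdef (Xvar fX \<omega>) (snd (snd \<omega>))"

definition Yvar :: "('d \<Rightarrow> 'v \<Rightarrow> bool) \<Rightarrow> ('i \<Rightarrow> 'l)
                      \<Rightarrow> ('i, 'l, 'd, 'v, 'w) noise \<Rightarrow> 'i \<Rightarrow> bool" where
  "Yvar fY asg \<omega> i = fY (fst \<omega> i) (fst (snd \<omega>) (i, asg i))"

definition utility :: "('i::finite \<Rightarrow> bool) \<Rightarrow> real" where
  "utility y = (\<Sum>i\<in>UNIV. of_bool (y i))"

definition pred_matrix :: "('l \<Rightarrow> 'x \<Rightarrow> real) \<Rightarrow> ('i \<Rightarrow> 'x) \<Rightarrow> 'i \<Rightarrow> 'l \<Rightarrow> real" where
  "pred_matrix g x = (\<lambda>i l. g l (x i))"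

definition feasible :: "('l \<Rightarrow> nat) \<Rightarrow> ('i::finite \<Rightarrow> 'l) \<Rightarrow> bool" where
  "feasible c p \<longleftrightarrow> (\<forall>l. card {i. p i = l} \<le> c l)"

definition Pi_set :: "('l \<Rightarrow> nat) \<Rightarrow> ('i::finite \<Rightarrow> 'x) \<Rightarrow> ('i \<Rightarrow> bool) \<Rightarrow> ('i \<Rightarrow> 'l)
                        \<Rightarrow> ('i \<Rightarrow> 'l) set" where
  "Pi_set c x y l0 = {p. feasible c p \<and> (\<forall>i. y i \<longrightarrow> p i = l0 i)}"

end

theory Submission
  imports Defs
begin

text \<open>The intervention is evaluated on the same noise as the default process, which is legitimate
  because the fresh noise of the interventional distribution has the same law. On every realisation
  in which the algorithmic assignment keeps each successful refugee at the default location, these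
  refugees still see the same noise and hence still succeed, so the utility can only grow.\<close>

lemma utility_mono:
  fixes y y' :: "'i::finite \<Rightarrow> bool"
  assumes "\<And>i. y i \<Longrightarrow> y' i"
  shows "utility y \<le> utility y'"
  unfolding utility_def using assms by (intro sum_mono) auto

lemma utility_nonneg: "0 \<le> utility (y :: 'i::finite \<Rightarrow> bool)"
  unfolding utility_def by (intro sum_nonneg) auto

lemma utility_le_card: "utility (y :: 'i::finite \<Rightarrow> bool) \<le> real CARD('i)"
  using utility_mono[of y "\<lambda>_. True"] by (simp add: utility_def)

lemma Yvar_mono_of_in_Pi_set:
  assumes "p \<in> Pi_set c x (Yvar fY l \<omega>) l" and "Yvar fY l \<omega> i"
  shows "Yvar fY p \<omega> i"
  using assms by (auto simp: Pi_set_def Yvar_def)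

lemma utility_Yvar_mono_of_in_Pi_set:
  assumes "p \<in> Pi_set c x (Yvar fY l \<omega>) l"
  shows "utility (Yvar fY l \<omega>) \<le> utility (Yvar fY p \<omega>)"
  using assms by (intro utility_mono) (rule Yvar_mono_of_in_Pi_set)

lemma prob_space_noise_measure:
  fixes PV :: "'l::finite \<Rightarrow> 'v measure"
  assumes "prob_space PD" and "\<And>l. prob_space (PV l)" and "prob_space PW"
  shows "prob_space (noise_measure PD PV PW :: ('i::finite, 'l, 'd, 'v, 'w) noise measure)"
  unfolding noise_measure_def by (intro prob_space_pair prob_space_PiM assms)

lemma measurable_noise_D:
  "(\<lambda>\<omega>. fst \<omega> i) \<in> noise_measure PD PV PW \<rightarrow>\<^sub>M PD"
  unfolding noise_measure_def by measurable

lemma measurable_noise_V: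
  assumes "\<And>l. sets (PV l) = sets MV"
  shows "(\<lambda>\<omega>. fst (snd \<omega>) (i, l)) \<in> noise_measure PD PV PW \<rightarrow>\<^sub>M MV"
proof -
  have "(\<lambda>\<omega>. fst (snd \<omega>) (i, l)) \<in> noise_measure PD PV PW \<rightarrow>\<^sub>M PV (snd (i, l))"
    unfolding noise_measure_def by measurable
  then show ?thesis by (simp add: measurable_cong_sets[OF refl assms])
qed

lemma measurable_noise_W:
  "(\<lambda>\<omega>. snd (snd \<omega>)) \<in> noise_measure PD PV PW \<rightarrow>\<^sub>M PW"
  unfolding noise_measure_def by measurable

lemma measurable_Xvar:
  assumes "fX \<in> PD \<rightarrow>\<^sub>M MX"
  shows "Xvar fX \<in> noise_measure PD PV PW \<rightarrow>\<^sub>M PiM UNIV (\<lambda>i. MX)"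
proof -
  have Xi: "(\<lambda>\<omega>. Xvar fX \<omega> i) \<in> noise_measure PD PV PW \<rightarrow>\<^sub>M MX" for i
    using measurable_comp[OF measurable_noise_D assms] by (simp add: Xvar_def comp_def)
  then show ?thesis
    by (intro measurable_PiM_single') (auto intro: measurable_space[OF Xi])
qed

lemma measurable_Lvar:
  assumes "fX \<in> PD \<rightarrow>\<^sub>M MX"
    and "(\<lambda>(x, w). pdef x w) \<in> PiM UNIV (\<lambda>i. MX) \<Otimes>\<^sub>M PW \<rightarrow>\<^sub>M count_space UNIV"
  shows "Lvar fX pdef \<in> noise_measure PD PV PW \<rightarrow>\<^sub>M count_space UNIV"
proof -
  have "(\<lambda>\<omega>. (Xvar fX \<omega>, snd (snd \<omega>))) \<in> noise_measure PD PV PW \<rightarrow>\<^sub>M PiM UNIV (\<lambda>i. MX) \<Otimes>\<^sub>M PW"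
    using measurable_Xvar[OF assms(1)] measurable_noise_W by (rule measurable_Pair)
  from measurable_comp[OF this assms(2)] show ?thesis
    by (simp add: comp_def Lvar_def[abs_def])
qed

lemma measurable_pred_matrix:
  assumes "\<And>l. g l \<in> borel_measurable MX" and "X \<in> M \<rightarrow>\<^sub>M PiM UNIV (\<lambda>i. MX)"
  shows "(\<lambda>\<omega>. pred_matrix g (X \<omega>)) \<in> M \<rightarrow>\<^sub>M PiM UNIV (\<lambda>i. PiM UNIV (\<lambda>l. borel))"
proof (rule measurable_PiM_single')
  fix i
  have Xi: "(\<lambda>\<omega>. X \<omega> i) \<in> M \<rightarrow>\<^sub>M MX"
    using measurable_comp[OF assms(2) measurable_component_singleton[of i UNIV "\<lambda>i. MX"]]
    by (simp add: comp_def)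
  show "(\<lambda>\<omega>. pred_matrix g (X \<omega>) i) \<in> M \<rightarrow>\<^sub>M PiM UNIV (\<lambda>l. borel)"
    by (rule measurable_PiM_single')
      (use measurable_comp[OF Xi assms(1)] in \<open>auto simp: comp_def pred_matrix_def\<close>)
qed (auto simp: space_PiM)

text \<open>The assignment may depend on the noise itself (as the default one does through X and W);
  measurability of the outcome then goes through the countably many fixed assignments.\<close>

lemma measurable_Yvar:
  fixes A :: "('i, 'l, 'd, 'v, 'w) noise \<Rightarrow> 'i::finite \<Rightarrow> 'l::finite"
  assumes fY: "(\<lambda>(d, v). fY d v) \<in> PD \<Otimes>\<^sub>M MV \<rightarrow>\<^sub>M count_space UNIV"
    and PV_sets: "\<And>l. sets (PV l) = sets MV"
    and A: "A \<in> noise_measure PD PV PW \<rightarrow>\<^sub>M count_space UNIV"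
  shows "(\<lambda>\<omega>. Yvar fY (A \<omega>) \<omega> i) \<in> noise_measure PD PV PW \<rightarrow>\<^sub>M count_space UNIV"
proof -
  have fixed: "(\<lambda>\<omega>. fY (fst \<omega> i) (fst (snd \<omega>) (i, p i))) \<in> noise_measure PD PV PW \<rightarrow>\<^sub>M count_space UNIV"
    for p :: "'i \<Rightarrow> 'l"
  proof -
    have "(\<lambda>\<omega>. (fst \<omega> i, fst (snd \<omega>) (i, p i))) \<in> noise_measure PD PV PW \<rightarrow>\<^sub>M PD \<Otimes>\<^sub>M MV"
      using measurable_noise_D measurable_noise_V[OF PV_sets] by (rule measurable_Pair)
    from measurable_comp[OF this fY] show ?thesis by (simp add: comp_def)
  qed
  have "(\<lambda>\<omega>. fY (fst \<omega> i) (fst (snd \<omega>) (i, A \<omega> i))) \<in> noise_measure PD PV PW \<rightarrow>\<^sub>M count_space UNIV"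
    by (rule measurable_compose_countable'[where f="\<lambda>p \<omega>. fY (fst \<omega> i) (fst (snd \<omega>) (i, p i))"
          and I=UNIV]) (auto intro: fixed A)
  then show ?thesis by (simp add: Yvar_def)
qed

lemma integrable_utility_Yvar:
  fixes A :: "('i, 'l, 'd, 'v, 'w) noise \<Rightarrow> 'i::finite \<Rightarrow> 'l::finite"
  assumes "prob_space PD" and "\<And>l. prob_space (PV l)" and "prob_space PW"
    and "(\<lambda>(d, v). fY d v) \<in> PD \<Otimes>\<^sub>M MV \<rightarrow>\<^sub>M count_space UNIV"
    and "\<And>l. sets (PV l) = sets MV"
    and "A \<in> noise_measure PD PV PW \<rightarrow>\<^sub>M count_space UNIV"
  shows "integrable (noise_measure PD PV PW) (\<lambda>\<omega>. utility (Yvar fY (A \<omega>) \<omega>))"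
proof -
  interpret prob_space "noise_measure PD PV PW :: ('i, 'l, 'd, 'v, 'w) noise measure"
    using assms(1-3) by (rule prob_space_noise_measure)
  have "(\<lambda>\<omega>. of_bool (Yvar fY (A \<omega>) \<omega> i) :: real) \<in> borel_measurable (noise_measure PD PV PW)"
    for i by (rule measurable_compose[OF measurable_Yvar[OF assms(4-6)]]) simp
  then have "(\<lambda>\<omega>. utility (Yvar fY (A \<omega>) \<omega>)) \<in> borel_measurable (noise_measure PD PV PW)"
    unfolding utility_def by (intro borel_measurable_sum)
  moreover have "AE \<omega> in noise_measure PD PV PW. norm (utility (Yvar fY (A \<omega>) \<omega>)) \<le> real CARD('i)"
    by (intro AE_I2) (simp add: abs_of_nonneg utility_nonneg utility_le_card)
  ultimately show ?thesis
    by (intro integrable_const_bound)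
qed

theorem mainTheorem3:
  fixes PD :: "'d measure" and PV :: "'l::finite \<Rightarrow> 'v measure" and PW :: "'w measure"
    and MV :: "'v measure" and MX :: "'x measure"
    and fX :: "'d \<Rightarrow> 'x" and fY :: "'d \<Rightarrow> 'v \<Rightarrow> bool"
    and pdef :: "('i::finite \<Rightarrow> 'x) \<Rightarrow> 'w \<Rightarrow> ('i \<Rightarrow> 'l)"
    and g :: "'l \<Rightarrow> 'x \<Rightarrow> real"
    and pol :: "('i \<Rightarrow> 'l \<Rightarrow> real) \<Rightarrow> ('i \<Rightarrow> 'l)"
    and c :: "'l \<Rightarrow> nat"
  assumes PD: "prob_space PD"
    and PV: "\<And>l. prob_space (PV l)" and PV_sets: "\<And>l. sets (PV l) = sets MV"
    and PW: "prob_space PW"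
    and fX_meas: "fX \<in> PD \<rightarrow>\<^sub>M MX"
    and fY_meas: "(\<lambda>(d, v). fY d v) \<in> PD \<Otimes>\<^sub>M MV \<rightarrow>\<^sub>M count_space UNIV"
    and pdef_meas: "(\<lambda>(x, w). pdef x w) \<in> (PiM UNIV (\<lambda>i. MX)) \<Otimes>\<^sub>M PW \<rightarrow>\<^sub>M count_space UNIV"
    and g_meas: "\<And>l. g l \<in> borel_measurable MX"
    and g_range: "\<And>l x. 0 \<le> g l x \<and> g l x \<le> 1"
    and pol_meas: "pol \<in> PiM UNIV (\<lambda>i. PiM UNIV (\<lambda>l. borel)) \<rightarrow>\<^sub>M count_space UNIV"
    and pol_feasible: "\<And>G. feasible c (pol G)"
    and pol_in_Pi: "AE \<omega> in noise_measure PD PV PW.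
           pol (pred_matrix g (Xvar fX \<omega>))
             \<in> Pi_set c (Xvar fX \<omega>) (Yvar fY (Lvar fX pdef \<omega>) \<omega>) (Lvar fX pdef \<omega>)"
  shows "(\<integral>\<omega>. utility (Yvar fY (pol (pred_matrix g (Xvar fX \<omega>))) \<omega>) \<partial>noise_measure PD PV PW)
         \<ge> (\<integral>\<omega>. utility (Yvar fY (Lvar fX pdef \<omega>) \<omega>) \<partial>noise_measure PD PV PW)"
proof -
  let ?N = "noise_measure PD PV PW :: ('i, 'l, 'd, 'v, 'w) noise measure"
  have pol_G: "(\<lambda>\<omega>. pol (pred_matrix g (Xvar fX \<omega>))) \<in> ?N \<rightarrow>\<^sub>M count_space UNIV"
    using measurable_comp[OF measurable_pred_matrix[OF g_meas measurable_Xvar[OF fX_meas]] pol_meas]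
    by (simp add: comp_def)
  have L: "Lvar fX pdef \<in> ?N \<rightarrow>\<^sub>M count_space UNIV"
    using fX_meas pdef_meas by (rule measurable_Lvar)
  have "AE \<omega> in ?N. utility (Yvar fY (Lvar fX pdef \<omega>) \<omega>)
                      \<le> utility (Yvar fY (pol (pred_matrix g (Xvar fX \<omega>))) \<omega>)"
    using pol_in_Pi by eventually_elim (rule utility_Yvar_mono_of_in_Pi_set)
  with integrable_utility_Yvar[OF PD PV PW fY_meas PV_sets L]
    integrable_utility_Yvar[OF PD PV PW fY_meas PV_sets pol_G]
  show ?thesis by (simp add: integral_mono_AE)
qed

end
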